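(* In the setting described in the context, let $F$ be strongly convex with respect to $\|\cdot\|_L$ with convexity parameter $\mu>0$. If $x_k$ is the random point generated by UCDC$(x_0)$, then $$\mathbf{E}[F(x_k)-F^*]\leq\left(1-\frac{1-\gamma_\mu}{n}\right)^k(F(x_0)-F^* ),$$ where $\gamma_\mu=1-\frac\mu4$ if $\mu\leq2$ and $\gamma_\mu=\frac1\mu$ otherwise.
   Context: Let $U\in\mathbf{R}^{N\times N}$ be a column permutation of the $N\times N$ identity matrix, partitioned as $U=[U_1,\dots,U_n]$ with $U_i\in\mathbf{R}^{N\times N_i}$, $\sum_iN_i=N$. For $x\in\mathbf{R}^N$ write $x^{(i)}=U_i^Tx$. Each $\mathbf{R}^{N_i}$ carries the norm $\|t\|_{(i)}=\langle B_it,t\rangle^{1/2}$ and dual norm $\|t\|_{(i)}^*=\langle B_i^{-1}t,t\rangle^{1/2}$ with $B_i$ positive definite. Consider minimizing $F(x)=f(x)+\Psi(x)$ over $\mathbf{R}^N$, where $f$ is convex and differentiable with $\|\nabla_if(x+U_it)-\nabla_if(x)\|_{(i)}^*\leq L_i\|t\|_{(i)}$ for all $x,t,i$ (constants $L_i>0$, $\nabla_if(x)=U_i^T\nabla f(x)$), and $\Psi(x)=\sum_i\Psi_i(x^{(i)})$ with each $\Psi_i$ proper closed convex. The problem has a minimizer; $F^*$ is the optimal value. Let $\|x\|_L=(\sum_iL_i\|x^{(i)}\|_{(i)}^2)^{1/2}$. Strong convexity w.r.t. $\|\cdot\|_L$ with parameter $\mu$: $F(x)\geq F(y)+\langle F'(y),x-y\rangle+\frac\mu2\|x-y\|_L^2$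 for all $x,y\in\mathrm{dom}\,F$ and all subgradients $F'(y)$. Algorithm UCDC$(x_0)$: for $k=0,1,2,\dots$, choose $i\in\{1,\dots,n\}$ uniformly at random (independently), compute $T^{(i)}(x_k)=\arg\min_{t\in\mathbf{R}^{N_i}}\{\langle\nabla_if(x_k),t\rangle+\frac{L_i}{2}\|t\|_{(i)}^2+\Psi_i(x_k^{(i)}+t)\}$ and set $x_{k+1}=x_k+U_iT^{(i)}(x_k)$. *)

theory Defs
  imports "HOL-Analysis.Analysis"
begin

text \<open>Coordinates of R^N are the finite type 'a; blocks are the finite type 'b.
  The column permutation U = [U_1,...,U_n] is encoded by the map blk assigning each
  coordinate to its block.  A vector of R^{N_i} is represented by its embedding
  U_i t, i.e. a vector of real^'a supported on block i.\<close>

definition blockset :: "('a \<Rightarrow> 'b) \<Rightarrow> 'b \<Rightarrow> 'a set" where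
  "blockset blk i = {a. blk a = i}"

definition bsub :: "('a::finite \<Rightarrow> 'b) \<Rightarrow> 'b \<Rightarrow> (real^'a) set" where
  "bsub blk i = {t. \<forall>a. blk a \<noteq> i \<longrightarrow> t $ a = 0}"

text \<open>bproj blk i x = U_i U_i^T x, the embedding of x^(i).\<close>
definition bproj :: "('a::finite \<Rightarrow> 'b) \<Rightarrow> 'b \<Rightarrow> real^'a \<Rightarrow> real^'a" where
  "bproj blk i x = (\<chi> a. if blk a = i then x $ a else 0)"

definition bquad :: "('a::finite \<Rightarrow> 'b) \<Rightarrow> ('b \<Rightarrow> 'a \<Rightarrow> 'a \<Rightarrow> real) \<Rightarrow> 'b \<Rightarrow> real^'a \<Rightarrow> real" where
  "bquad blk M i t = (\<Sum>a\<in>blockset blk i. \<Sum>c\<in>blockset blk i. M i a c * t $ a * t $ c)"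

definition bnorm :: "('a::finite \<Rightarrow> 'b) \<Rightarrow> ('b \<Rightarrow> 'a \<Rightarrow> 'a \<Rightarrow> real) \<Rightarrow> 'b \<Rightarrow> real^'a \<Rightarrow> real" where
  "bnorm blk B i t = sqrt (bquad blk B i t)"

definition block_posdef :: "('a::finite \<Rightarrow> 'b) \<Rightarrow> ('b \<Rightarrow> 'a \<Rightarrow> 'a \<Rightarrow> real) \<Rightarrow> 'b \<Rightarrow> bool" where
  "block_posdef blk B i \<longleftrightarrow>
     (\<forall>a\<in>blockset blk i. \<forall>c\<in>blockset blk i. B i a c = B i c a) \<and>
     (\<forall>t\<in>bsub blk i. t \<noteq> 0 \<longrightarrow> bquad blk B i t > 0)"

definition block_inverse :: "('a::finite \<Rightarrow> 'b) \<Rightarrow> ('b \<Rightarrow> 'a \<Rightarrow> 'a \<Rightarrow> real) \<Rightarrow> ('b \<Rightarrow> 'a \<Rightarrow> 'a \<Rightarrow> real) \<Rightarrow> 'b \<Rightarrow> bool" where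
  "block_inverse blk B Binv i \<longleftrightarrow>
     (\<forall>a\<in>blockset blk i. \<forall>d\<in>blockset blk i.
        (\<Sum>c\<in>blockset blk i. B i a c * Binv i c d) = (if a = d then 1 else 0))"

definition bdual :: "('a::finite \<Rightarrow> 'b) \<Rightarrow> ('b \<Rightarrow> 'a \<Rightarrow> 'a \<Rightarrow> real) \<Rightarrow> 'b \<Rightarrow> real^'a \<Rightarrow> real" where
  "bdual blk Binv i t = sqrt (bquad blk Binv i t)"

definition Lnorm :: "('a::finite \<Rightarrow> 'b::finite) \<Rightarrow> ('b \<Rightarrow> 'a \<Rightarrow> 'a \<Rightarrow> real) \<Rightarrow> ('b \<Rightarrow> real) \<Rightarrow> real^'a \<Rightarrow> real" where
  "Lnorm blk B L x = sqrt (\<Sum>i\<in>UNIV. L i * (bnorm blk B i (bproj blk i x))\<^sup>2)"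

definition proper_closed_convex_on :: "(real^'a) set \<Rightarrow> (real^'a::finite \<Rightarrow> ereal) \<Rightarrow> bool" where
  "proper_closed_convex_on S g \<longleftrightarrow>
     (\<forall>t\<in>S. g t \<noteq> -\<infinity>) \<and> (\<exists>t\<in>S. g t \<noteq> \<infinity>) \<and>
     (\<forall>t\<in>S. \<forall>s\<in>S. \<forall>\<theta>::real. 0 \<le> \<theta> \<and> \<theta> \<le> 1 \<longrightarrow>
        g (\<theta> *\<^sub>R t + (1 - \<theta>) *\<^sub>R s) \<le> ereal \<theta> * g t + ereal (1 - \<theta>) * g s) \<and>
     closed {(t, r::real). t \<in> S \<and> g t \<le> ereal r}"

definition Fobj :: "('a::finite \<Rightarrow> 'b::finite) \<Rightarrow> (real^'a \<Rightarrow> real) \<Rightarrow> ('b \<Rightarrow> real^'a \<Rightarrow> ereal) \<Rightarrow> real^'a \<Rightarrow> ereal" where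
  "Fobj blk f Psi x = ereal (f x) + (\<Sum>i\<in>UNIV. Psi i (bproj blk i x))"

definition subgradients :: "(real^'a::finite \<Rightarrow> ereal) \<Rightarrow> real^'a \<Rightarrow> (real^'a) set" where
  "subgradients F y = {g. \<forall>z. F z \<ge> F y + ereal (g \<bullet> (z - y))}"

definition strongly_convex_L :: "(real^'a::finite \<Rightarrow> ereal) \<Rightarrow> (real^'a \<Rightarrow> real) \<Rightarrow> real \<Rightarrow> bool" where
  "strongly_convex_L F nrm \<mu> \<longleftrightarrow>
     (\<forall>x y g. F x < \<infinity> \<and> F y < \<infinity> \<and> g \<in> subgradients F y \<longrightarrow>
        F x \<ge> F y + ereal (g \<bullet> (x - y)) + ereal (\<mu> / 2 * (nrm (x - y))\<^sup>2))"

text \<open>T^(i)(x), embedded as U_i T^(i)(x) (note <grad_i f(x), t> = <grad f(x), U_i t>).\<close>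
definition Tblock :: "('a::finite \<Rightarrow> 'b) \<Rightarrow> ('b \<Rightarrow> 'a \<Rightarrow> 'a \<Rightarrow> real) \<Rightarrow> ('b \<Rightarrow> real)
    \<Rightarrow> (real^'a \<Rightarrow> real^'a) \<Rightarrow> ('b \<Rightarrow> real^'a \<Rightarrow> ereal) \<Rightarrow> 'b \<Rightarrow> real^'a \<Rightarrow> real^'a" where
  "Tblock blk B L grad Psi i x =
     (SOME t. t \<in> bsub blk i \<and>
        (\<forall>s\<in>bsub blk i.
           ereal (grad x \<bullet> t + L i / 2 * (bnorm blk B i t)\<^sup>2) + Psi i (bproj blk i x + t)
         \<le> ereal (grad x \<bullet> s + L i / 2 * (bnorm blk B i s)\<^sup>2) + Psi i (bproj blk i x + s)))"

text \<open>Iterates of UCDC(x0) along the index sequence is (is k = block chosen at step k).\<close>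
fun ucdc :: "('a::finite \<Rightarrow> 'b) \<Rightarrow> ('b \<Rightarrow> 'a \<Rightarrow> 'a \<Rightarrow> real) \<Rightarrow> ('b \<Rightarrow> real)
    \<Rightarrow> (real^'a \<Rightarrow> real^'a) \<Rightarrow> ('b \<Rightarrow> real^'a \<Rightarrow> ereal) \<Rightarrow> real^'a \<Rightarrow> (nat \<Rightarrow> 'b) \<Rightarrow> nat \<Rightarrow> real^'a" where
  "ucdc blk B L grad Psi x0 is 0 = x0"
| "ucdc blk B L grad Psi x0 is (Suc k) =
     (let x = ucdc blk B L grad Psi x0 is k in x + Tblock blk B L grad Psi (is k) x)"

text \<open>Expectation over i_0,...,i_{k-1} i.i.d. uniform on the n blocks.\<close>
definition expect_ucdc :: "nat \<Rightarrow> ((nat \<Rightarrow> 'b::finite) \<Rightarrow> ereal) \<Rightarrow> ereal" where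
  "expect_ucdc k X = ereal (1 / real CARD('b) ^ k) * (\<Sum>is\<in>PiE {..<k} (\<lambda>_. UNIV). X is)"

definition gamma_mu :: "real \<Rightarrow> real" where
  "gamma_mu \<mu> = (if \<mu> \<le> 2 then 1 - \<mu> / 4 else 1 / \<mu>)"

end

theory Submission
  imports Defs
begin

text \<open>Each UCDC step minimises, along one block, the quadratic upper model of F given by the
  block Lipschitz bound on the gradient; the minimiser exists because a closed convex function
  plus a positive definite quadratic is coercive.  Summed over all n blocks, the model minima are
  at most F y + 1/2 ||y - x||_L^2 for every y.  Taking y = (1 - l) x + l x* on the segment to a
  minimiser and using strong convexity, ||x - x*||_L^2 <= 2/mu (F x - F*), gives
  sum_i (F (x + T_i x) - F*) <= (n - l + l^2/mu) (F x - F*), and the best l in [0,1] turns the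
  factor into n - (1 - gamma_mu).  Averaging over the uniformly chosen block and iterating gives
  the rate.\<close>

section \<open>Block quadratic forms\<close>

definition bform :: "('a::finite \<Rightarrow> 'b) \<Rightarrow> ('b \<Rightarrow> 'a \<Rightarrow> 'a \<Rightarrow> real) \<Rightarrow> 'b \<Rightarrow> real^'a \<Rightarrow> real^'a \<Rightarrow> real" where
  "bform blk M i u v = (\<Sum>a\<in>blockset blk i. \<Sum>c\<in>blockset blk i. M i a c * u $ a * v $ c)"

lemma bquad_eq_bform: "bquad blk M i t = bform blk M i t t"
  by (simp add: bquad_def bform_def)

lemma bform_diff_left: "bform blk M i (u - w) v = bform blk M i u v - bform blk M i w v"
  by (simp add: bform_def algebra_simps sum_subtractf)

lemma bform_diff_right: "bform blk M i u (v - w) = bform blk M i u v - bform blk M i u w"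
  by (simp add: bform_def algebra_simps sum_subtractf)

lemma bform_scaleR_left: "bform blk M i (c *\<^sub>R u) v = c * bform blk M i u v"
  by (simp add: bform_def algebra_simps sum_distrib_left)

lemma bform_scaleR_right: "bform blk M i u (c *\<^sub>R v) = c * bform blk M i u v"
  by (simp add: bform_def algebra_simps sum_distrib_left)

lemma bform_commute:
  assumes "block_posdef blk B i"
  shows "bform blk B i u v = bform blk B i v u"
proof -
  have "bform blk B i u v = (\<Sum>a\<in>blockset blk i. \<Sum>c\<in>blockset blk i. B i c a * v $ c * u $ a)"
    unfolding bform_def using assms by (intro sum.cong refl) (auto simp: block_posdef_def)
  also have "\<dots> = bform blk B i v u"
    unfolding bform_def by (rule sum.swap)
  finally show ?thesis .
qed

lemma bquad_scaleR: "bquad blk M i (c *\<^sub>R t) = c\<^sup>2 * bquad blk M i t"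
  by (simp add: bquad_eq_bform bform_scaleR_left bform_scaleR_right power2_eq_square)

lemma bnorm_scaleR: "bnorm blk B i (c *\<^sub>R t) = \<bar>c\<bar> * bnorm blk B i t"
  by (simp add: bnorm_def bquad_scaleR real_sqrt_mult)

lemma continuous_on_bquad [continuous_intros]:
  assumes "continuous_on S g"
  shows "continuous_on S (\<lambda>q. bquad blk M i (g q :: real^'a::finite))"
proof -
  have "continuous_on S (\<lambda>q. g q $ a)" for a
    by (intro continuous_intros assms)
  then show ?thesis
    unfolding bquad_def by (intro continuous_intros assms)
qed

lemma continuous_on_bnorm [continuous_intros]:
  "continuous_on S g \<Longrightarrow> continuous_on S (\<lambda>q. bnorm blk B i (g q :: real^'a::finite))"
  unfolding bnorm_def by (intro continuous_intros)

lemma subspace_bsub: "subspace (bsub blk i)"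
  by (simp add: subspace_def bsub_def)

lemma bsub_diff: "u \<in> bsub blk i \<Longrightarrow> v \<in> bsub blk i \<Longrightarrow> u - v \<in> bsub blk i"
  by (simp add: bsub_def)

lemma bsub_add: "u \<in> bsub blk i \<Longrightarrow> v \<in> bsub blk i \<Longrightarrow> u + v \<in> bsub blk i"
  by (simp add: bsub_def)

lemma bsub_scaleR: "u \<in> bsub blk i \<Longrightarrow> c *\<^sub>R u \<in> bsub blk i"
  by (simp add: bsub_def)

lemma add_bsub_iff: "p \<in> bsub blk i \<Longrightarrow> p + t \<in> bsub blk i \<longleftrightarrow> t \<in> bsub blk i"
  by (simp add: bsub_def)

lemma bproj_in_bsub: "bproj blk i x \<in> bsub blk i"
  by (simp add: bsub_def bproj_def)

lemma bproj_bsub_same: "t \<in> bsub blk i \<Longrightarrow> bproj blk i t = t"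
  by (auto simp: bsub_def bproj_def vec_eq_iff)

lemma bproj_bsub_other: "t \<in> bsub blk i \<Longrightarrow> j \<noteq> i \<Longrightarrow> bproj blk j t = 0"
  by (auto simp: bsub_def bproj_def vec_eq_iff)

lemma bproj_add: "bproj blk i (x + y) = bproj blk i x + bproj blk i y"
  by (auto simp: bproj_def vec_eq_iff)

lemma bproj_diff: "bproj blk i (x - y) = bproj blk i x - bproj blk i y"
  by (auto simp: bproj_def vec_eq_iff)

lemma bproj_scaleR: "bproj blk i (c *\<^sub>R x) = c *\<^sub>R bproj blk i x"
  by (auto simp: bproj_def vec_eq_iff)

lemma inner_bproj: "t \<in> bsub blk i \<Longrightarrow> g \<bullet> t = bproj blk i g \<bullet> t"
  by (auto simp: bsub_def bproj_def inner_vec_def intro!: sum.cong)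

lemma sum_bproj: "(\<Sum>i\<in>UNIV. bproj (blk::'a::finite \<Rightarrow> 'b::finite) i x) = x"
  by (auto simp: bproj_def vec_eq_iff sum.delta')

lemma inner_bsub_eq_sum:
  assumes "t \<in> bsub blk i"
  shows "g \<bullet> t = (\<Sum>a\<in>blockset blk i. g $ a * t $ a)"
proof -
  have "g \<bullet> t = (\<Sum>a\<in>UNIV. g $ a * t $ a)" by (simp add: inner_vec_def)
  also have "\<dots> = (\<Sum>a\<in>blockset blk i. g $ a * t $ a)"
    using assms by (intro sum.mono_neutral_right) (auto simp: bsub_def blockset_def)
  finally show ?thesis .
qed

lemma bquad_nonneg:
  assumes "block_posdef blk B i" "t \<in> bsub blk i"
  shows "0 \<le> bquad blk B i t"
  using assms by (cases "t = 0") (auto simp: bquad_def block_posdef_def intro: less_imp_le)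

lemma bnorm_nonneg: "block_posdef blk B i \<Longrightarrow> t \<in> bsub blk i \<Longrightarrow> 0 \<le> bnorm blk B i t"
  by (simp add: bnorm_def bquad_nonneg)

lemma bform_Cauchy_Schwarz:
  assumes P: "block_posdef blk B i" and u: "u \<in> bsub blk i" and t: "t \<in> bsub blk i"
  shows "(bform blk B i u t)\<^sup>2 \<le> bform blk B i u u * bform blk B i t t"
proof (cases "t = 0")
  case True
  then show ?thesis by (simp add: bform_def)
next
  case False
  let ?q = "bform blk B i t t" and ?p = "bform blk B i u t" and ?r = "bform blk B i u u"
  have q: "?q > 0" using P t False by (auto simp: block_posdef_def bquad_eq_bform)
  define l where "l = ?p / ?q"
  have "0 \<le> bquad blk B i (u - l *\<^sub>R t)"
    by (intro bquad_nonneg P bsub_diff bsub_scaleR u t)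
  also have "\<dots> = ?r - 2 * l * ?p + l * l * ?q"
    unfolding bquad_eq_bform bform_diff_left bform_diff_right bform_scaleR_left bform_scaleR_right
    using bform_commute[OF P, of t u] by (simp add: algebra_simps)
  also have "\<dots> = ?r - ?p\<^sup>2 / ?q"
    using q by (simp add: l_def field_simps power2_eq_square)
  finally show ?thesis using q by (simp add: field_simps)
qed

definition bsolve :: "('a::finite \<Rightarrow> 'b) \<Rightarrow> ('b \<Rightarrow> 'a \<Rightarrow> 'a \<Rightarrow> real) \<Rightarrow> 'b \<Rightarrow> real^'a \<Rightarrow> real^'a" where
  "bsolve blk Binv i g = (\<chi> a. if blk a = i then (\<Sum>d\<in>blockset blk i. Binv i a d * g $ d) else 0)"

lemma bsolve_in_bsub: "bsolve blk Binv i g \<in> bsub blk i"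
  by (simp add: bsolve_def bsub_def)

lemma bsolve_nth: "a \<in> blockset blk i \<Longrightarrow> bsolve blk Binv i g $ a = (\<Sum>d\<in>blockset blk i. Binv i a d * g $ d)"
  by (simp add: bsolve_def blockset_def)

lemma block_matrix_bsolve:
  assumes I: "block_inverse blk B Binv i" and a: "a \<in> blockset blk i"
  shows "(\<Sum>c\<in>blockset blk i. B i a c * bsolve blk Binv i g $ c) = g $ a"
proof -
  let ?S = "blockset blk i"
  have "(\<Sum>c\<in>?S. B i a c * bsolve blk Binv i g $ c) = (\<Sum>c\<in>?S. \<Sum>d\<in>?S. B i a c * Binv i c d * g $ d)"
    by (intro sum.cong refl) (simp add: bsolve_nth sum_distrib_left mult.assoc)
  also have "\<dots> = (\<Sum>d\<in>?S. (\<Sum>c\<in>?S. B i a c * Binv i c d) * g $ d)"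
    by (subst sum.swap) (simp add: sum_distrib_right)
  also have "\<dots> = (\<Sum>d\<in>?S. if a = d then g $ d else 0)"
    using I a by (intro sum.cong refl) (auto simp: block_inverse_def)
  finally show ?thesis using a by simp
qed

lemma inner_eq_bform_bsolve:
  assumes I: "block_inverse blk B Binv i" and t: "t \<in> bsub blk i"
  shows "g \<bullet> t = bform blk B i t (bsolve blk Binv i g)"
proof -
  let ?S = "blockset blk i"
  have "g \<bullet> t = (\<Sum>a\<in>?S. (\<Sum>c\<in>?S. B i a c * bsolve blk Binv i g $ c) * t $ a)"
    unfolding inner_bsub_eq_sum[OF t] by (intro sum.cong refl) (simp add: block_matrix_bsolve[OF I])
  also have "\<dots> = bform blk B i t (bsolve blk Binv i g)"
    by (simp add: bform_def sum_distrib_right sum_distrib_left mult_ac)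
  finally show ?thesis .
qed

lemma bquad_inverse_eq_bquad_bsolve:
  assumes I: "block_inverse blk B Binv i"
  shows "bquad blk Binv i g = bquad blk B i (bsolve blk Binv i g)"
proof -
  let ?S = "blockset blk i" and ?u = "bsolve blk Binv i g"
  have "bquad blk Binv i g = (\<Sum>a\<in>?S. g $ a * ?u $ a)"
    unfolding bquad_def by (intro sum.cong refl) (simp add: bsolve_nth sum_distrib_left mult_ac)
  also have "\<dots> = g \<bullet> ?u"
    by (rule inner_bsub_eq_sum[OF bsolve_in_bsub, symmetric])
  also have "\<dots> = bquad blk B i ?u"
    by (simp add: inner_eq_bform_bsolve[OF I bsolve_in_bsub] bquad_eq_bform)
  finally show ?thesis .
qed

lemma bdual_bproj_nonneg:
  assumes "block_posdef blk B i" "block_inverse blk B Binv i"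
  shows "0 \<le> bdual blk Binv i (bproj blk i g)"
  by (simp add: bdual_def bquad_inverse_eq_bquad_bsolve[OF assms(2)] bquad_nonneg[OF assms(1) bsolve_in_bsub])

lemma abs_inner_le_bdual_bnorm:
  assumes P: "block_posdef blk B i" and I: "block_inverse blk B Binv i" and t: "t \<in> bsub blk i"
  shows "\<bar>g \<bullet> t\<bar> \<le> bdual blk Binv i (bproj blk i g) * bnorm blk B i t"
proof -
  let ?u = "bsolve blk Binv i (bproj blk i g)"
  have "g \<bullet> t = bform blk B i t ?u"
    by (subst inner_bproj[OF t]) (rule inner_eq_bform_bsolve[OF I t])
  then have "(g \<bullet> t)\<^sup>2 = (bform blk B i t ?u)\<^sup>2"
    by simp
  also have "\<dots> \<le> bquad blk Binv i (bproj blk i g) * bquad blk B i t"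
    using bform_Cauchy_Schwarz[OF P t bsolve_in_bsub, of Binv "bproj blk i g"]
    unfolding bquad_inverse_eq_bquad_bsolve[OF I] by (simp add: bquad_eq_bform mult.commute)
  finally have "sqrt ((g \<bullet> t)\<^sup>2) \<le> sqrt (bquad blk Binv i (bproj blk i g) * bquad blk B i t)"
    by (rule real_sqrt_le_mono)
  then show ?thesis by (simp add: bdual_def bnorm_def real_sqrt_mult)
qed

lemma bnorm_dominates_norm:
  assumes P: "block_posdef blk B i" and I: "block_inverse blk B Binv i"
  obtains C where "0 \<le> C" "\<And>t. t \<in> bsub blk i \<Longrightarrow> norm t \<le> C * bnorm blk B i t"
proof -
  define C where "C = (\<Sum>a\<in>UNIV. bdual blk Binv i (bproj blk i (axis a (1::real))))"
  have "0 \<le> C"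
    unfolding C_def using bdual_bproj_nonneg[OF P I] by (simp add: sum_nonneg)
  moreover have "norm t \<le> C * bnorm blk B i t" if t: "t \<in> bsub blk i" for t
  proof -
    have "\<bar>t $ a\<bar> \<le> bdual blk Binv i (bproj blk i (axis a 1)) * bnorm blk B i t" for a
    proof -
      have "t $ a = axis a 1 \<bullet> t" by (subst inner_commute) (simp add: inner_axis)
      then show ?thesis using abs_inner_le_bdual_bnorm[OF P I t, of "axis a 1"] by simp
    qed
    then have "(\<Sum>a\<in>UNIV. \<bar>t $ a\<bar>) \<le> C * bnorm blk B i t"
      unfolding C_def sum_distrib_right by (rule sum_mono)
    then show ?thesis using norm_le_l1_cart[of t] by linarith
  qed
  ultimately show thesis by (rule that)
qed

section \<open>The smooth part\<close>

lemma block_descent_lemma: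
  assumes P: "block_posdef blk B i" and I: "block_inverse blk B Binv i"
    and f_grad: "\<And>x. (f has_derivative (\<lambda>h. grad x \<bullet> h)) (at x)"
    and lip: "\<And>x t. t \<in> bsub blk i \<Longrightarrow>
        bdual blk Binv i (bproj blk i (grad (x + t)) - bproj blk i (grad x)) \<le> L * bnorm blk B i t"
    and t: "t \<in> bsub blk i"
  shows "f (x + t) \<le> f x + grad x \<bullet> t + L / 2 * (bnorm blk B i t)\<^sup>2"
proof -
  define Q where "Q = (bnorm blk B i t)\<^sup>2"
  define \<psi> where "\<psi> = (\<lambda>s::real. f (x + s *\<^sub>R t) - s * (grad x \<bullet> t) - L / 2 * s\<^sup>2 * Q)"
  have f_line: "((\<lambda>s. f (x + s *\<^sub>R t)) has_real_derivative (grad (x + s *\<^sub>R t) \<bullet> t)) (at s)" for s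
  proof -
    have "((\<lambda>s. x + s *\<^sub>R t) has_derivative (\<lambda>h. h *\<^sub>R t)) (at s)"
      by (auto intro!: derivative_eq_intros)
    from has_derivative_compose[OF this f_grad]
    have "((\<lambda>s. f (x + s *\<^sub>R t)) has_derivative (\<lambda>h. h * (grad (x + s *\<^sub>R t) \<bullet> t))) (at s)"
      by simp
    then show ?thesis
      unfolding has_field_derivative_def by (rule has_derivative_eq_rhs) (simp add: fun_eq_iff)
  qed
  have slope: "grad (x + s *\<^sub>R t) \<bullet> t - grad x \<bullet> t \<le> L * s * Q" if s: "0 \<le> s" for s
  proof -
    have "grad (x + s *\<^sub>R t) \<bullet> t - grad x \<bullet> t = (grad (x + s *\<^sub>R t) - grad x) \<bullet> t"
      by (simp add: inner_diff_left)
    also have "\<dots> \<le> bdual blk Binv i (bproj blk i (grad (x + s *\<^sub>R t) - grad x)) * bnorm blk B i t"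
      using abs_inner_le_bdual_bnorm[OF P I t] by (meson abs_le_D1)
    also have "\<dots> \<le> (L * bnorm blk B i (s *\<^sub>R t)) * bnorm blk B i t"
      using lip[of "s *\<^sub>R t" x] bsub_scaleR[OF t] bnorm_nonneg[OF P t]
      by (intro mult_right_mono) (auto simp: bproj_diff)
    also have "\<dots> = L * s * Q"
      using s by (simp add: bnorm_scaleR Q_def power2_eq_square)
    finally show ?thesis .
  qed
  have "\<exists>y. (\<psi> has_real_derivative y) (at s) \<and> y \<le> 0" if "0 \<le> s" "s \<le> 1" for s
  proof (intro exI conjI)
    show "(\<psi> has_real_derivative (grad (x + s *\<^sub>R t) \<bullet> t - 1 * (grad x \<bullet> t) - L / 2 * (2 * s) * Q)) (at s)"
      unfolding \<psi>_def by (intro derivative_eq_intros) (auto intro: f_line)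
    show "grad (x + s *\<^sub>R t) \<bullet> t - 1 * (grad x \<bullet> t) - L / 2 * (2 * s) * Q \<le> 0"
      using slope[OF that(1)] by simp
  qed
  then have "\<psi> 1 \<le> \<psi> 0"
    by (intro DERIV_nonpos_imp_nonincreasing[of 0 1 \<psi>]) auto
  then show ?thesis by (simp add: \<psi>_def Q_def)
qed

lemma convex_on_gradient_inequality:
  fixes f :: "'a::real_normed_vector \<Rightarrow> real"
  assumes f_convex: "convex_on UNIV f"
    and f_grad: "(f has_derivative f') (at x)"
  shows "f x + f' (y - x) \<le> f y"
proof -
  define g where "g = (\<lambda>s::real. f (x + s *\<^sub>R (y - x)))"
  have "convex_on UNIV g"
  proof (rule convex_onI)
    fix t a b :: real
    assume "0 < t" "t < 1"
    have "x + ((1 - t) *\<^sub>R a + t *\<^sub>R b) *\<^sub>R (y - x) = (1 - t) *\<^sub>R (x + a *\<^sub>R (y - x)) + t *\<^sub>R (x + b *\<^sub>R (y - x))"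
      by (simp add: algebra_simps)
    then show "g ((1 - t) *\<^sub>R a + t *\<^sub>R b) \<le> (1 - t) * g a + t * g b"
      unfolding g_def using convex_onD[OF f_convex, of t] \<open>0 < t\<close> \<open>t < 1\<close> by simp
  qed simp
  moreover have "(g has_real_derivative f' (y - x)) (at 0)"
  proof -
    have "((\<lambda>s. x + s *\<^sub>R (y - x)) has_derivative (\<lambda>h. h *\<^sub>R (y - x))) (at 0)"
      by (auto intro!: derivative_eq_intros)
    from has_derivative_compose[OF this, of f f'] f_grad
    have "(g has_derivative (\<lambda>h. f' (h *\<^sub>R (y - x)))) (at 0)"
      by (simp add: g_def)
    moreover have "f' (h *\<^sub>R (y - x)) = f' (y - x) * h" for h
      using has_derivative_bounded_linear[OF f_grad] by (simp add: linear_simps)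
    ultimately show ?thesis
      unfolding has_field_derivative_def by (simp add: mult.commute[of _ "f' (y - x)"])
  qed
  ultimately have "g 1 - g 0 \<ge> f' (y - x)"
    using convex_on_imp_above_tangent[of UNIV g 0 1] by simp
  then show ?thesis by (simp add: g_def)
qed

section \<open>Existence of the block step\<close>

lemma proper_closed_convex_on_convex_epigraph:
  fixes G :: "real^'a::finite \<Rightarrow> ereal"
  assumes pcc: "proper_closed_convex_on S G" and S: "convex S"
  shows "convex {(t, r::real). t \<in> S \<and> G t \<le> ereal r}"
proof (rule convexI)
  fix p q :: "(real^'a) \<times> real" and u v :: real
  assume "p \<in> {(t, r). t \<in> S \<and> G t \<le> ereal r}" "q \<in> {(t, r). t \<in> S \<and> G t \<le> ereal r}"
    and uv: "0 \<le> u" "0 \<le> v" "u + v = 1"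
  then obtain t r s r' where pq: "p = (t, r)" "q = (s, r')" and ts: "t \<in> S" "s \<in> S"
    and le: "G t \<le> ereal r" "G s \<le> ereal r'"
    by (cases p, cases q) auto
  have v: "v = 1 - u" "u \<le> 1" using uv by auto
  have "G (u *\<^sub>R t + (1 - u) *\<^sub>R s) \<le> ereal u * G t + ereal (1 - u) * G s"
    using pcc ts uv v unfolding proper_closed_convex_on_def by blast
  also have "\<dots> \<le> ereal u * ereal r + ereal (1 - u) * ereal r'"
    using le uv v by (intro add_mono ereal_mult_left_mono) auto
  finally have "G (u *\<^sub>R t + (1 - u) *\<^sub>R s) \<le> ereal (u * r + (1 - u) * r')" by simp
  moreover have "u *\<^sub>R t + (1 - u) *\<^sub>R s \<in> S"
    using convexD[OF S ts] uv v by simp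
  ultimately show "u *\<^sub>R p + v *\<^sub>R q \<in> {(t, r). t \<in> S \<and> G t \<le> ereal r}"
    using pq v by simp
qed

text \<open>Separate a point below the graph from the closed convex epigraph; the separating
  hyperplane cannot be vertical, so it is the graph of an affine function.\<close>
lemma proper_closed_convex_on_affine_minorant:
  fixes G :: "real^'a::finite \<Rightarrow> ereal"
  assumes pcc: "proper_closed_convex_on S G" and S: "convex S"
  obtains a c where "\<And>t. t \<in> S \<Longrightarrow> ereal (a \<bullet> t + c) \<le> G t"
proof -
  define E where "E = {(t, r::real). t \<in> S \<and> G t \<le> ereal r}"
  have not_minf: "\<And>t. t \<in> S \<Longrightarrow> G t \<noteq> -\<infinity>" and finite_value: "\<exists>t\<in>S. G t \<noteq> \<infinity>"
    and "closed E"
    using pcc unfolding proper_closed_convex_on_def E_def by blast+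
  have "convex E"
    unfolding E_def by (rule proper_closed_convex_on_convex_epigraph[OF pcc S])
  obtain t0 r0 where t0: "t0 \<in> S" "G t0 = ereal r0"
    using finite_value not_minf by (metis ereal_cases)
  then have "(t0, r0 - 1) \<notin> E" by (simp add: E_def)
  then obtain a b where sep: "inner a (t0, r0 - 1) < b" "\<forall>q\<in>E. b < inner a q"
    using separating_hyperplane_closed_point[OF \<open>convex E\<close> \<open>closed E\<close>] by blast
  obtain a1 a2 where a: "a = (a1, a2)" by (cases a)
  have "(t0, r0) \<in> E" using t0 by (simp add: E_def)
  then have "0 < a2" using sep a by (auto simp: algebra_simps)
  show thesis
  proof (rule that[of "- (1 / a2) *\<^sub>R a1" "b / a2"])
    fix t assume t: "t \<in> S"
    show "ereal (- (1 / a2) *\<^sub>R a1 \<bullet> t + b / a2) \<le> G t"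
    proof (cases "G t")
      case (real r)
      then have "b < a1 \<bullet> t + a2 * r" using sep(2) a t by (auto simp: E_def)
      with \<open>0 < a2\<close> show ?thesis by (simp add: real field_simps)
    qed (use not_minf t in auto)
  qed
qed

text \<open>Minimise the height r over the compact part of the epigraph below the level c0.\<close>
lemma closed_epigraph_attains_min:
  fixes g :: "'a::heine_borel \<Rightarrow> ereal"
  assumes closed: "closed {(t, r). t \<in> S \<and> g t \<le> ereal r}"
    and t0: "t0 \<in> S" "g t0 \<le> ereal c0"
    and bounded: "bounded {t \<in> S. g t \<le> ereal c0}"
    and lower: "\<And>t. t \<in> S \<Longrightarrow> ereal m \<le> g t"
  shows "\<exists>t\<in>S. \<forall>s\<in>S. g t \<le> g s"
proof -
  define K where "K = {(t, r). t \<in> S \<and> g t \<le> ereal r} \<inter> {q. snd q \<le> c0}"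
  have "closed K"
    unfolding K_def by (intro closed_Int closed closed_Collect_le continuous_intros)
  moreover have "K \<subseteq> {t \<in> S. g t \<le> ereal c0} \<times> {m..c0}"
  proof
    fix q assume "q \<in> K"
    then obtain t r where q: "q = (t, r)" "t \<in> S" "g t \<le> ereal r" "r \<le> c0"
      by (auto simp: K_def)
    have "g t \<le> ereal c0" using q(3) q(4) by (simp add: order_trans)
    moreover have "m \<le> r" using lower[OF q(2)] q(3) by (metis ereal_less_eq(3) order_trans)
    ultimately show "q \<in> {t \<in> S. g t \<le> ereal c0} \<times> {m..c0}" using q by simp
  qed
  then have "bounded K"
    by (rule bounded_subset[OF bounded_Times[OF bounded bounded_closed_interval]])
  ultimately have "compact K"
    by (simp add: compact_eq_bounded_closed)
  moreover have "(t0, c0) \<in> K"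
    using t0 by (simp add: K_def)
  moreover have "continuous_on K snd"
    by (rule continuous_on_snd[OF continuous_on_id, unfolded id_def])
  ultimately obtain q where "q \<in> K" "\<And>q'. q' \<in> K \<Longrightarrow> snd q \<le> snd q'"
    using continuous_attains_inf[of K snd] by blast
  then obtain ts rs where ts: "ts \<in> S" "g ts \<le> ereal rs" "rs \<le> c0"
    and min: "\<And>s r. s \<in> S \<Longrightarrow> g s \<le> ereal r \<Longrightarrow> r \<le> c0 \<Longrightarrow> rs \<le> r"
    by (cases q) (fastforce simp: K_def)
  have "g ts \<le> g s" if s: "s \<in> S" for s
  proof (cases "g s")
    case (real r)
    then have "rs \<le> r" using min[OF s] ts(3) by (cases "r \<le> c0") auto
    then have "ereal rs \<le> g s" by (simp add: real)
    with ts(2) show ?thesis by (rule order_trans)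
  qed (use lower[OF s] in auto)
  with ts(1) show ?thesis by blast
qed

lemma closed_epigraph_translate_add:
  fixes G :: "'a::real_normed_vector \<Rightarrow> ereal"
  assumes closed: "closed {(u, r). u \<in> S \<and> G u \<le> ereal r}" and \<phi>: "continuous_on UNIV \<phi>"
  shows "closed {(t, r). p + t \<in> S \<and> ereal (\<phi> t) + G (p + t) \<le> ereal r}"
proof -
  have shift: "ereal a + z \<le> ereal r \<longleftrightarrow> z \<le> ereal (r - a)" for a r and z :: ereal
    by (cases z) auto
  have "{(t, r). p + t \<in> S \<and> ereal (\<phi> t) + G (p + t) \<le> ereal r}
      = (\<lambda>q. (p + fst q, snd q - \<phi> (fst q))) -` {(u, r). u \<in> S \<and> G u \<le> ereal r}"
    by (simp add: shift set_eq_iff split_beta)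
  also have "closed \<dots>"
    by (intro continuous_closed_vimage closed continuous_intros continuous_on_compose2[OF \<phi>]) auto
  finally show ?thesis .
qed

lemma quadratic_lower_bound:
  fixes l D c s :: real
  assumes "0 < l"
  shows "c - D\<^sup>2 / (2 * l) \<le> l / 2 * s\<^sup>2 - D * s + c"
proof -
  have "0 \<le> (l * s - D)\<^sup>2 / (2 * l)" using assms by simp
  also have "\<dots> = l / 2 * s\<^sup>2 - D * s + D\<^sup>2 / (2 * l)"
    using assms by (simp add: field_simps power2_eq_square)
  finally show ?thesis by simp
qed

lemma quadratic_sublevel_bound:
  fixes l D c c0 s :: real
  assumes "0 < l" "0 \<le> s" "l / 2 * s\<^sup>2 - D * s + c \<le> c0"
  shows "s \<le> max 1 (2 * (\<bar>D\<bar> + \<bar>c0 - c\<bar>) / l)"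
proof (cases "s \<le> 1")
  case False
  have "l / 2 * s * s \<le> (\<bar>D\<bar> + \<bar>c0 - c\<bar>) * s"
  proof -
    have "D * s \<le> \<bar>D\<bar> * s"
      using assms(2) by (simp add: mult_right_mono)
    moreover have "c0 - c \<le> \<bar>c0 - c\<bar> * s"
      using False by (smt (verit) mult_le_cancel_left1)
    ultimately have "l / 2 * (s * s) \<le> \<bar>D\<bar> * s + \<bar>c0 - c\<bar> * s"
      using assms(3) unfolding power2_eq_square by linarith
    then show ?thesis by (simp add: algebra_simps)
  qed
  then have "l / 2 * s \<le> \<bar>D\<bar> + \<bar>c0 - c\<bar>" using False by simp
  then have "s \<le> 2 * (\<bar>D\<bar> + \<bar>c0 - c\<bar>) / l" using assms(1) by (simp add: field_simps)
  then show ?thesis by simp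
qed simp

text \<open>The linear terms are controlled through the dual norm, the nonsmooth part through an
  affine minorant of G.\<close>
lemma block_model_coercive:
  fixes G :: "real^'a::finite \<Rightarrow> ereal"
  assumes P: "block_posdef blk B i" and I: "block_inverse blk B Binv i"
    and pcc: "proper_closed_convex_on (bsub blk i) G" and p: "p \<in> bsub blk i"
  obtains D c where "\<And>t. t \<in> bsub blk i \<Longrightarrow>
      ereal (l / 2 * (bnorm blk B i t)\<^sup>2 - D * bnorm blk B i t + c)
    \<le> ereal (w \<bullet> t + l / 2 * (bnorm blk B i t)\<^sup>2) + G (p + t)"
proof -
  obtain a c where aff: "\<And>u. u \<in> bsub blk i \<Longrightarrow> ereal (a \<bullet> u + c) \<le> G u"
    using proper_closed_convex_on_affine_minorant[OF pcc subspace_imp_convex[OF subspace_bsub]] by blast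
  define D where "D = bdual blk Binv i (bproj blk i (w + a))"
  have "ereal (l / 2 * (bnorm blk B i t)\<^sup>2 - D * bnorm blk B i t + (c + a \<bullet> p))
      \<le> ereal (w \<bullet> t + l / 2 * (bnorm blk B i t)\<^sup>2) + G (p + t)"
    if t: "t \<in> bsub blk i" for t
  proof -
    have "- (D * bnorm blk B i t) \<le> (w + a) \<bullet> t"
      using abs_inner_le_bdual_bnorm[OF P I t, of "w + a"] by (simp add: D_def)
    then have "ereal (l / 2 * (bnorm blk B i t)\<^sup>2 - D * bnorm blk B i t + (c + a \<bullet> p))
        \<le> ereal (w \<bullet> t + l / 2 * (bnorm blk B i t)\<^sup>2) + ereal (a \<bullet> (p + t) + c)"
      by (simp add: inner_add_left inner_add_right)
    also have "\<dots> \<le> ereal (w \<bullet> t + l / 2 * (bnorm blk B i t)\<^sup>2) + G (p + t)"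
      using aff[of "p + t"] t p by (intro add_left_mono) (simp add: add_bsub_iff)
    finally show ?thesis .
  qed
  then show thesis by (rule that)
qed

lemma closed_epigraph_block_model:
  fixes G :: "real^'a::finite \<Rightarrow> ereal"
  assumes pcc: "proper_closed_convex_on (bsub blk i) G" and p: "p \<in> bsub blk i"
  shows "closed {(t, r). t \<in> bsub blk i \<and>
      ereal (w \<bullet> t + l / 2 * (bnorm blk B i t)\<^sup>2) + G (p + t) \<le> ereal r}"
proof -
  have "closed {(t, r). p + t \<in> bsub blk i \<and>
      ereal (w \<bullet> t + l / 2 * (bnorm blk B i t)\<^sup>2) + G (p + t) \<le> ereal r}"
    using pcc unfolding proper_closed_convex_on_def
    by (intro closed_epigraph_translate_add continuous_intros) auto
  then show ?thesis by (simp add: add_bsub_iff[OF p])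
qed

lemma block_model_attains_min:
  fixes G :: "real^'a::finite \<Rightarrow> ereal"
  assumes P: "block_posdef blk B i" and I: "block_inverse blk B Binv i"
    and l: "0 < l" and pcc: "proper_closed_convex_on (bsub blk i) G" and p: "p \<in> bsub blk i"
  shows "\<exists>t. t \<in> bsub blk i \<and>
        (\<forall>s\<in>bsub blk i.
           ereal (w \<bullet> t + l / 2 * (bnorm blk B i t)\<^sup>2) + G (p + t)
         \<le> ereal (w \<bullet> s + l / 2 * (bnorm blk B i s)\<^sup>2) + G (p + s))"
proof -
  let ?S = "bsub blk i" and ?bn = "bnorm blk B i"
  define m where "m t = ereal (w \<bullet> t + l / 2 * (?bn t)\<^sup>2) + G (p + t)" for t
  obtain D c where lower: "\<And>t. t \<in> ?S \<Longrightarrow> ereal (l / 2 * (?bn t)\<^sup>2 - D * ?bn t + c) \<le> m t"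
    unfolding m_def using block_model_coercive[OF P I pcc p] by blast
  obtain C where C: "0 \<le> C" "\<And>t. t \<in> ?S \<Longrightarrow> norm t \<le> C * ?bn t"
    using bnorm_dominates_norm[OF P I] by blast
  obtain t1 r1 where t1: "t1 \<in> ?S" "G t1 = ereal r1"
    using pcc unfolding proper_closed_convex_on_def by (metis ereal_cases)
  define c0 where "c0 = w \<bullet> (t1 - p) + l / 2 * (?bn (t1 - p))\<^sup>2 + r1"
  have t0: "t1 - p \<in> ?S" "m (t1 - p) \<le> ereal c0"
    using t1 p by (simp_all add: bsub_diff m_def c0_def)
  define R where "R = max 1 (2 * (\<bar>D\<bar> + \<bar>c0 - c\<bar>) / l)"
  have "norm t \<le> C * R" if "t \<in> ?S" "m t \<le> ereal c0" for t
  proof -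
    have "ereal (l / 2 * (?bn t)\<^sup>2 - D * ?bn t + c) \<le> ereal c0"
      using lower[OF that(1)] that(2) by (rule order_trans)
    then have "?bn t \<le> R"
      unfolding R_def using l bnorm_nonneg[OF P that(1)] by (intro quadratic_sublevel_bound) auto
    then have "C * ?bn t \<le> C * R" using C(1) by (rule mult_left_mono)
    then show ?thesis using C(2)[OF that(1)] by linarith
  qed
  then have "bounded {t \<in> ?S. m t \<le> ereal c0}"
    unfolding bounded_iff by (intro exI[of _ "C * R"]) auto
  moreover have "ereal (c - D\<^sup>2 / (2 * l)) \<le> m t" if "t \<in> ?S" for t
  proof -
    have "ereal (c - D\<^sup>2 / (2 * l)) \<le> ereal (l / 2 * (?bn t)\<^sup>2 - D * ?bn t + c)"
      using quadratic_lower_bound[OF l] by simp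
    then show ?thesis using lower[OF that] by (rule order_trans)
  qed
  moreover have "closed {(t, r). t \<in> ?S \<and> m t \<le> ereal r}"
    unfolding m_def by (rule closed_epigraph_block_model[OF pcc p])
  ultimately have "\<exists>t\<in>?S. \<forall>s\<in>?S. m t \<le> m s"
    using t0 by (intro closed_epigraph_attains_min)
  then show ?thesis unfolding m_def by blast
qed

section \<open>Iterates and expectations\<close>

lemma ucdc_cong:
  "(\<And>j. j < k \<Longrightarrow> is j = is' j) \<Longrightarrow> ucdc blk B L grad Psi x0 is k = ucdc blk B L grad Psi x0 is' k"
  by (induct k) (auto simp: Let_def)

lemma sum_PiE_insert:
  assumes "x \<notin> S"
  shows "(\<Sum>g\<in>PiE (insert x S) T. h g) = (\<Sum>y\<in>T x. \<Sum>g\<in>PiE S T. h (g(x := y)))"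
  unfolding PiE_insert_eq sum.reindex[OF inj_combinator[OF assms]] sum.cartesian_product
  by (simp add: comp_def split_beta)

text \<open>The factor 1 - \<gamma>_\<mu> is the maximum over l in [0,1] of l - l^2/\<mu>, attained at l = min 1 (\<mu>/2).\<close>
lemma gamma_mu_eq:
  assumes "0 < \<mu>"
  shows "gamma_mu \<mu> = 1 - min 1 (\<mu> / 2) + (min 1 (\<mu> / 2))\<^sup>2 / \<mu>"
  using assms by (auto simp: gamma_mu_def power2_eq_square field_simps)

lemma gamma_mu_pos: "0 < \<mu> \<Longrightarrow> 0 < gamma_mu \<mu>"
  by (auto simp: gamma_mu_def)

section \<open>Analysis of UCDC\<close>

locale ucdc_setting =
  fixes blk :: "'a::finite \<Rightarrow> 'b::finite"
    and B Binv :: "'b \<Rightarrow> 'a \<Rightarrow> 'a \<Rightarrow> real"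
    and L :: "'b \<Rightarrow> real"
    and f :: "real^'a \<Rightarrow> real"
    and grad :: "real^'a \<Rightarrow> real^'a"
    and Psi :: "'b \<Rightarrow> real^'a \<Rightarrow> ereal"
    and \<mu> :: real
    and xs :: "real^'a"
  assumes B_posdef: "\<And>i. block_posdef blk B i"
    and Binv: "\<And>i. block_inverse blk B Binv i"
    and L_pos: "\<And>i. L i > 0"
    and f_convex: "convex_on UNIV f"
    and f_grad: "\<And>x. (f has_derivative (\<lambda>h. grad x \<bullet> h)) (at x)"
    and f_lip: "\<And>x t i. t \<in> bsub blk i \<Longrightarrow>
        bdual blk Binv i (bproj blk i (grad (x + t)) - bproj blk i (grad x)) \<le> L i * bnorm blk B i t"
    and Psi_pcc: "\<And>i. proper_closed_convex_on (bsub blk i) (Psi i)"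
    and mu_pos: "\<mu> > 0"
    and strong: "strongly_convex_L (Fobj blk f Psi) (Lnorm blk B L) \<mu>"
    and xs_min: "\<And>x. Fobj blk f Psi xs \<le> Fobj blk f Psi x"
begin

abbreviation "F \<equiv> Fobj blk f Psi"
abbreviation "T \<equiv> Tblock blk B L grad Psi"
abbreviation "X \<equiv> ucdc blk B L grad Psi"
abbreviation "bn \<equiv> bnorm blk B"

definition F_real :: "real^'a \<Rightarrow> real" where
  "F_real x = real_of_ereal (F x)"

definition psi :: "'b \<Rightarrow> real^'a \<Rightarrow> real" where
  "psi i x = real_of_ereal (Psi i (bproj blk i x))"

definition model_min :: "'b \<Rightarrow> real^'a \<Rightarrow> real" where
  "model_min i x = grad x \<bullet> T i x + L i / 2 * (bn i (T i x))\<^sup>2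
     + real_of_ereal (Psi i (bproj blk i x + T i x))"

lemma T_minimizes:
  "T i x \<in> bsub blk i \<and>
     (\<forall>s\<in>bsub blk i.
        ereal (grad x \<bullet> T i x + L i / 2 * (bn i (T i x))\<^sup>2) + Psi i (bproj blk i x + T i x)
      \<le> ereal (grad x \<bullet> s + L i / 2 * (bn i s)\<^sup>2) + Psi i (bproj blk i x + s))"
  unfolding Tblock_def
  by (rule someI_ex) (rule block_model_attains_min[OF B_posdef Binv L_pos Psi_pcc bproj_in_bsub])

lemma Psi_not_minf: "t \<in> bsub blk i \<Longrightarrow> Psi i t \<noteq> -\<infinity>"
  using Psi_pcc[of i] by (auto simp: proper_closed_convex_on_def)

lemma F_not_minf: "F x \<noteq> -\<infinity>"
proof -
  have "(\<Sum>j\<in>UNIV. Psi j (bproj blk j x)) \<noteq> -\<infinity>"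
    using Psi_not_minf[OF bproj_in_bsub] by (induct rule: infinite_finite_induct) auto
  then show ?thesis by (simp add: Fobj_def)
qed

lemma F_finite_iff: "F x \<noteq> \<infinity> \<longleftrightarrow> (\<forall>i. Psi i (bproj blk i x) \<noteq> \<infinity>)"
  using sum_Pinfty[of "\<lambda>j. Psi j (bproj blk j x)" UNIV] by (simp add: Fobj_def)

lemma Psi_eq_psi: "F x \<noteq> \<infinity> \<Longrightarrow> Psi i (bproj blk i x) = ereal (psi i x)"
  using F_finite_iff Psi_not_minf[OF bproj_in_bsub, of i x]
  by (cases "Psi i (bproj blk i x)") (auto simp: psi_def)

lemma F_eq_psi_sum: "F x \<noteq> \<infinity> \<Longrightarrow> F x = ereal (f x + (\<Sum>j\<in>UNIV. psi j x))"
  by (simp add: Fobj_def Psi_eq_psi)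

lemma F_real_eq_psi_sum: "F x \<noteq> \<infinity> \<Longrightarrow> F_real x = f x + (\<Sum>j\<in>UNIV. psi j x)"
  by (simp add: F_real_def F_eq_psi_sum)

lemma F_xs_finite: "F x \<noteq> \<infinity> \<Longrightarrow> F xs \<noteq> \<infinity>"
  using xs_min[of x] by (auto simp: top_unique[where 'a=ereal, unfolded top_ereal_def])

lemma Lnorm_power2: "(Lnorm blk B L v)\<^sup>2 = (\<Sum>i\<in>UNIV. L i * (bn i (bproj blk i v))\<^sup>2)"
proof -
  have "0 \<le> (\<Sum>i\<in>UNIV. L i * (bn i (bproj blk i v))\<^sup>2)"
    using L_pos by (intro sum_nonneg) (simp add: less_imp_le)
  then show ?thesis by (simp add: Lnorm_def)
qed

lemma Lnorm_scaleR_power2: "(Lnorm blk B L (c *\<^sub>R v))\<^sup>2 = c\<^sup>2 * (Lnorm blk B L v)\<^sup>2"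
  by (simp add: Lnorm_power2 bproj_scaleR bnorm_scaleR power_mult_distrib sum_distrib_left mult_ac)

lemma ereal_model_min:
  assumes "F x \<noteq> \<infinity>"
  shows "ereal (model_min i x)
    = ereal (grad x \<bullet> T i x + L i / 2 * (bn i (T i x))\<^sup>2) + Psi i (bproj blk i x + T i x)"
proof -
  have "ereal (grad x \<bullet> T i x + L i / 2 * (bn i (T i x))\<^sup>2) + Psi i (bproj blk i x + T i x)
      \<le> ereal (grad x \<bullet> 0 + L i / 2 * (bn i 0)\<^sup>2) + Psi i (bproj blk i x + 0)"
    using conjunct2[OF T_minimizes[of i x]] subspace_0[OF subspace_bsub] by (rule bspec)
  also have "\<dots> = ereal (psi i x)"
    by (simp add: bnorm_def bquad_def Psi_eq_psi[OF assms])
  finally have "Psi i (bproj blk i x + T i x) \<noteq> \<infinity>" by auto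
  moreover have "Psi i (bproj blk i x + T i x) \<noteq> -\<infinity>"
    using conjunct1[OF T_minimizes[of i x]] by (intro Psi_not_minf bsub_add bproj_in_bsub)
  ultimately show ?thesis
    by (cases "Psi i (bproj blk i x + T i x)") (auto simp: model_min_def)
qed

lemma model_min_le:
  assumes "F x \<noteq> \<infinity>" "s \<in> bsub blk i"
  shows "ereal (model_min i x) \<le> ereal (grad x \<bullet> s + L i / 2 * (bn i s)\<^sup>2) + Psi i (bproj blk i x + s)"
  unfolding ereal_model_min[OF assms(1)] using conjunct2[OF T_minimizes[of i x]] assms(2) by (rule bspec)

lemma F_block_step:
  assumes Fx: "F x \<noteq> \<infinity>"
  shows "F (x + T i x) \<noteq> \<infinity>" "F_real (x + T i x) \<le> F_real x + model_min i x - psi i x"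
proof -
  let ?t = "T i x"
  have t: "?t \<in> bsub blk i" using T_minimizes by (rule conjunct1)
  define q where "q = real_of_ereal (Psi i (bproj blk i x + ?t))"
  have "ereal (model_min i x) = ereal (grad x \<bullet> ?t + L i / 2 * (bn i ?t)\<^sup>2 + q)"
    by (simp add: model_min_def q_def)
  then have q: "Psi i (bproj blk i x + ?t) = ereal q"
    using ereal_model_min[OF Fx, of i] by (cases "Psi i (bproj blk i x + ?t)") auto
  have Psi_step: "Psi j (bproj blk j (x + ?t)) = ereal (psi j x + (if j = i then q - psi i x else 0))" for j
    using q Psi_eq_psi[OF Fx, of j] bproj_bsub_same[OF t] bproj_bsub_other[OF t, of j]
    by (cases "j = i") (simp_all add: bproj_add)
  then have F_step: "F (x + ?t) = ereal (f (x + ?t) + (\<Sum>j\<in>UNIV. psi j x) + (q - psi i x))"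
    by (simp add: Fobj_def sum.distrib)
  then show "F (x + ?t) \<noteq> \<infinity>" by simp
  have "f (x + ?t) \<le> f x + grad x \<bullet> ?t + L i / 2 * (bn i ?t)\<^sup>2"
    using f_lip by (intro block_descent_lemma[OF B_posdef Binv f_grad _ t])
  then show "F_real (x + ?t) \<le> F_real x + model_min i x - psi i x"
    using F_step F_real_eq_psi_sum[OF Fx] by (simp add: F_real_def model_min_def q_def)
qed

lemma sum_model_min_le:
  assumes Fx: "F x \<noteq> \<infinity>" and Fy: "F y \<noteq> \<infinity>"
  shows "f x + (\<Sum>i\<in>UNIV. model_min i x) \<le> F_real y + (Lnorm blk B L (y - x))\<^sup>2 / 2"
proof -
  let ?s = "\<lambda>i. bproj blk i (y - x)"
  have "model_min i x \<le> grad x \<bullet> ?s i + L i / 2 * (bn i (?s i))\<^sup>2 + psi i y" for i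
  proof -
    have "bproj blk i x + ?s i = bproj blk i y" by (simp add: bproj_diff)
    then show ?thesis
      using model_min_le[OF Fx bproj_in_bsub, of i "y - x"] Psi_eq_psi[OF Fy, of i] by simp
  qed
  then have "(\<Sum>i\<in>UNIV. model_min i x)
      \<le> (\<Sum>i\<in>UNIV. grad x \<bullet> ?s i + L i / 2 * (bn i (?s i))\<^sup>2 + psi i y)"
    by (rule sum_mono)
  also have "\<dots> = grad x \<bullet> (y - x) + (Lnorm blk B L (y - x))\<^sup>2 / 2 + (\<Sum>i\<in>UNIV. psi i y)"
    by (simp add: sum.distrib inner_sum_right[symmetric] sum_bproj Lnorm_power2 sum_divide_distrib)
  finally show ?thesis
    using convex_on_gradient_inequality[OF f_convex f_grad, of x y] F_real_eq_psi_sum[OF Fy] by simp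
qed

lemma F_convex_combination:
  assumes Fx: "F x \<noteq> \<infinity>" and Fz: "F z \<noteq> \<infinity>" and l: "0 \<le> l" "l \<le> 1"
  shows "F ((1 - l) *\<^sub>R x + l *\<^sub>R z) \<noteq> \<infinity>"
    "F_real ((1 - l) *\<^sub>R x + l *\<^sub>R z) \<le> (1 - l) * F_real x + l * F_real z"
proof -
  define y where "y = (1 - l) *\<^sub>R x + l *\<^sub>R z"
  have Psi_y: "Psi i (bproj blk i y) \<le> ereal (l * psi i z + (1 - l) * psi i x)" for i
  proof -
    have "bproj blk i y = l *\<^sub>R bproj blk i z + (1 - l) *\<^sub>R bproj blk i x"
      unfolding y_def bproj_add bproj_scaleR by (simp add: algebra_simps)
    then have "Psi i (bproj blk i y) \<le> ereal l * Psi i (bproj blk i z) + ereal (1 - l) * Psi i (bproj blk i x)"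
      using Psi_pcc[of i] l bproj_in_bsub[of blk i z] bproj_in_bsub[of blk i x]
      unfolding proper_closed_convex_on_def by (metis (no_types, lifting))
    then show ?thesis
      by (simp add: Psi_eq_psi[OF Fx] Psi_eq_psi[OF Fz])
  qed
  have "Psi i (bproj blk i y) \<noteq> \<infinity>" for i
    using Psi_y[of i] by (cases "Psi i (bproj blk i y)") auto
  then have Fy: "F y \<noteq> \<infinity>"
    by (simp add: F_finite_iff)
  then show "F ((1 - l) *\<^sub>R x + l *\<^sub>R z) \<noteq> \<infinity>" by (simp add: y_def)
  have "(\<Sum>i\<in>UNIV. psi i y) \<le> (\<Sum>i\<in>UNIV. l * psi i z + (1 - l) * psi i x)"
    using Psi_y by (intro sum_mono) (simp add: Psi_eq_psi[OF Fy])
  also have "\<dots> = l * (\<Sum>i\<in>UNIV. psi i z) + (1 - l) * (\<Sum>i\<in>UNIV. psi i x)"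
    by (simp add: sum.distrib sum_distrib_left)
  finally have "(\<Sum>i\<in>UNIV. psi i y) \<le> l * (\<Sum>i\<in>UNIV. psi i z) + (1 - l) * (\<Sum>i\<in>UNIV. psi i x)" .
  moreover have "f y \<le> (1 - l) * f x + l * f z"
    unfolding y_def using convex_onD[OF f_convex, of l x z] l by simp
  ultimately have "F_real y \<le> (1 - l) * F_real x + l * F_real z"
    unfolding F_real_eq_psi_sum[OF Fx] F_real_eq_psi_sum[OF Fz] F_real_eq_psi_sum[OF Fy]
    by (simp only: distrib_left)
  then show "F_real ((1 - l) *\<^sub>R x + l *\<^sub>R z) \<le> (1 - l) * F_real x + l * F_real z"
    by (simp add: y_def)
qed

lemma quadratic_growth:
  assumes Fx: "F x \<noteq> \<infinity>"
  shows "\<mu> / 2 * (Lnorm blk B L (x - xs))\<^sup>2 \<le> F_real x - F_real xs"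
proof -
  have "0 \<in> subgradients F xs" using xs_min by (simp add: subgradients_def)
  then have "F xs + ereal (\<mu> / 2 * (Lnorm blk B L (x - xs))\<^sup>2) \<le> F x"
    using strong[unfolded strongly_convex_L_def, rule_format, of x xs 0] Fx F_xs_finite[OF Fx]
    by (simp add: less_top[symmetric])
  then show ?thesis
    using F_eq_psi_sum[OF Fx] F_eq_psi_sum[OF F_xs_finite[OF Fx]] by (simp add: F_real_def)
qed

text \<open>The block models are compared with the point (1 - l) x + l xs.\<close>
lemma sum_model_min_le_segment:
  assumes Fx: "F x \<noteq> \<infinity>" and l: "0 \<le> l" "l \<le> 1"
  shows "f x + (\<Sum>i\<in>UNIV. model_min i x) \<le> F_real x - (l - l\<^sup>2 / \<mu>) * (F_real x - F_real xs)"
proof -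
  define y where "y = (1 - l) *\<^sub>R x + l *\<^sub>R xs"
  note Fxs = F_xs_finite[OF Fx]
  have yx: "y - x = (- l) *\<^sub>R (x - xs)" by (simp add: y_def algebra_simps)
  have "(Lnorm blk B L (y - x))\<^sup>2 = l\<^sup>2 * (Lnorm blk B L (x - xs))\<^sup>2"
    unfolding yx Lnorm_scaleR_power2 by simp
  also have "\<dots> \<le> l\<^sup>2 * (2 / \<mu> * (F_real x - F_real xs))"
    using quadratic_growth[OF Fx] mu_pos by (intro mult_left_mono) (simp_all add: field_simps)
  finally have dist: "(Lnorm blk B L (y - x))\<^sup>2 / 2 \<le> l\<^sup>2 / \<mu> * (F_real x - F_real xs)"
    by (simp add: algebra_simps)
  have "f x + (\<Sum>i\<in>UNIV. model_min i x) \<le> F_real y + (Lnorm blk B L (y - x))\<^sup>2 / 2"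
    using sum_model_min_le[OF Fx] F_convex_combination(1)[OF Fx Fxs l] by (simp add: y_def)
  moreover have "F_real y \<le> (1 - l) * F_real x + l * F_real xs"
    using F_convex_combination(2)[OF Fx Fxs l] by (simp add: y_def)
  moreover have "F_real x - (l - l\<^sup>2 / \<mu>) * (F_real x - F_real xs)
      = (1 - l) * F_real x + l * F_real xs + l\<^sup>2 / \<mu> * (F_real x - F_real xs)"
    by (simp add: algebra_simps)
  ultimately show ?thesis using dist by linarith
qed

lemma sum_block_steps_le:
  assumes Fx: "F x \<noteq> \<infinity>"
  shows "(\<Sum>i\<in>UNIV. F_real (x + T i x) - F_real xs)
     \<le> (real CARD('b) - (1 - gamma_mu \<mu>)) * (F_real x - F_real xs)"
proof -
  define l where "l = min 1 (\<mu> / 2)"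
  have l: "0 \<le> l" "l \<le> 1" using mu_pos by (auto simp: l_def)
  have "(\<Sum>i\<in>UNIV. F_real (x + T i x) - F_real xs)
      \<le> (\<Sum>i\<in>UNIV. F_real x + model_min i x - psi i x - F_real xs)"
    using F_block_step(2)[OF Fx] by (intro sum_mono) (simp add: algebra_simps)
  also have "\<dots> = real CARD('b) * (F_real x - F_real xs) + (f x + (\<Sum>i\<in>UNIV. model_min i x)) - F_real x"
    by (simp add: sum.distrib sum_subtractf F_real_eq_psi_sum[OF Fx] algebra_simps)
  also have "\<dots> \<le> (real CARD('b) - (l - l\<^sup>2 / \<mu>)) * (F_real x - F_real xs)"
    using sum_model_min_le_segment[OF Fx l] by (simp add: algebra_simps)
  also have "\<dots> = (real CARD('b) - (1 - gamma_mu \<mu>)) * (F_real x - F_real xs)"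
    by (simp add: gamma_mu_eq[OF mu_pos] l_def)
  finally show ?thesis .
qed

lemma ucdc_finite: "F x0 \<noteq> \<infinity> \<Longrightarrow> F (X x0 is k) \<noteq> \<infinity>"
  by (induct k) (simp_all add: Let_def F_block_step)

definition gap_sum :: "real^'a \<Rightarrow> nat \<Rightarrow> real" where
  "gap_sum x0 k = (\<Sum>is\<in>PiE {..<k} (\<lambda>_. UNIV). F_real (X x0 is k) - F_real xs)"

lemma gap_sum_Suc_le:
  assumes "F x0 \<noteq> \<infinity>"
  shows "gap_sum x0 (Suc k) \<le> (real CARD('b) - (1 - gamma_mu \<mu>)) * gap_sum x0 k"
proof -
  have prefix: "X x0 (g(k := y)) k = X x0 g k" for g y
    by (rule ucdc_cong) simp
  have "gap_sum x0 (Suc k)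
      = (\<Sum>y\<in>UNIV. \<Sum>g\<in>PiE {..<k} (\<lambda>_. UNIV). F_real (X x0 (g(k := y)) (Suc k)) - F_real xs)"
    unfolding gap_sum_def lessThan_Suc by (rule sum_PiE_insert) simp
  also have "\<dots> = (\<Sum>g\<in>PiE {..<k} (\<lambda>_. UNIV). \<Sum>y\<in>UNIV. F_real (X x0 g k + T y (X x0 g k)) - F_real xs)"
    by (subst sum.swap) (simp add: prefix Let_def)
  also have "\<dots> \<le> (\<Sum>g\<in>PiE {..<k} (\<lambda>_. UNIV). (real CARD('b) - (1 - gamma_mu \<mu>)) * (F_real (X x0 g k) - F_real xs))"
    by (intro sum_mono sum_block_steps_le ucdc_finite assms)
  finally show ?thesis
    by (simp add: gap_sum_def sum_distrib_left)
qed

lemma gap_sum_le: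
  assumes "F x0 \<noteq> \<infinity>"
  shows "gap_sum x0 k \<le> (real CARD('b) - (1 - gamma_mu \<mu>)) ^ k * (F_real x0 - F_real xs)"
proof (induct k)
  case 0
  then show ?case by (simp add: gap_sum_def)
next
  case (Suc k)
  have "0 \<le> real CARD('b) - (1 - gamma_mu \<mu>)"
    using gamma_mu_pos[OF mu_pos] zero_less_card_finite[where 'a='b] by linarith
  then show ?case
    using order_trans[OF gap_sum_Suc_le[OF assms] mult_left_mono[OF Suc]] by (simp add: mult_ac)
qed

lemma INF_F_eq: "(INF x. F x) = F xs"
  by (rule antisym) (auto intro: INF_lower INF_greatest xs_min)

lemma F_minus_F_xs: "F y \<noteq> \<infinity> \<Longrightarrow> F y - F xs = ereal (F_real y - F_real xs)"
  using F_xs_finite[of y] F_not_minf[of y] F_not_minf[of xs]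
  by (cases "F y"; cases "F xs") (auto simp: F_real_def)

lemma expect_ucdc_eq_gap_sum:
  assumes "F x0 \<noteq> \<infinity>"
  shows "expect_ucdc k (\<lambda>is. F (X x0 is k) - F xs) = ereal (1 / real CARD('b) ^ k * gap_sum x0 k)"
  unfolding expect_ucdc_def gap_sum_def by (simp add: F_minus_F_xs ucdc_finite assms)

lemma expect_ucdc_le:
  "expect_ucdc k (\<lambda>is. F (X x0 is k) - (INF x. F x))
    \<le> ereal ((1 - (1 - gamma_mu \<mu>) / real CARD('b)) ^ k) * (F x0 - (INF x. F x))"
proof -
  define n where "n = real CARD('b)"
  define c where "c = 1 - (1 - gamma_mu \<mu>) / n"
  have n: "1 \<le> n" using zero_less_card_finite[where 'a='b] unfolding n_def by linarith
  have c: "0 < c" using n gamma_mu_pos[OF mu_pos] by (simp add: c_def field_simps)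
  show ?thesis
  proof (cases "F x0 = \<infinity>")
    case True
    then have "F x0 - F xs = \<infinity>"
      using F_not_minf[of xs] by (cases "F xs") auto
    moreover have "0 < c ^ k" using c by simp
    ultimately have "ereal (c ^ k) * (F x0 - F xs) = \<infinity>"
      using c by simp
    then show ?thesis
      unfolding INF_F_eq c_def n_def by (simp only: ereal_less_eq(1))
  next
    case False
    have "c = (n - (1 - gamma_mu \<mu>)) / n" using n by (simp add: c_def field_simps)
    then have "1 / n ^ k * gap_sum x0 k \<le> c ^ k * (F_real x0 - F_real xs)"
      using gap_sum_le[OF False, of k] n by (simp add: n_def power_divide divide_right_mono)
    then show ?thesis
      unfolding INF_F_eq expect_ucdc_eq_gap_sum[OF False] F_minus_F_xs[OF False]
      by (simp add: n_def c_def)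
  qed
qed

end

theorem theorem6:
  fixes blk :: "'a::finite \<Rightarrow> 'b::finite"
    and B Binv :: "'b \<Rightarrow> 'a \<Rightarrow> 'a \<Rightarrow> real"
    and L :: "'b \<Rightarrow> real"
    and f :: "real^'a \<Rightarrow> real"
    and grad :: "real^'a \<Rightarrow> real^'a"
    and Psi :: "'b \<Rightarrow> real^'a \<Rightarrow> ereal"
    and \<mu> :: real and x0 :: "real^'a" and k :: nat
  assumes blocks_nonempty: "\<And>i. blockset blk i \<noteq> {}"
    and B_posdef: "\<And>i. block_posdef blk B i"
    and Binv: "\<And>i. block_inverse blk B Binv i"
    and L_pos: "\<And>i. L i > 0"
    and f_convex: "convex_on UNIV f"
    and f_grad: "\<And>x. (f has_derivative (\<lambda>h. grad x \<bullet> h)) (at x)"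
    and f_lip: "\<And>x t i. t \<in> bsub blk i \<Longrightarrow>
        bdual blk Binv i (bproj blk i (grad (x + t)) - bproj blk i (grad x)) \<le> L i * bnorm blk B i t"
    and Psi_pcc: "\<And>i. proper_closed_convex_on (bsub blk i) (Psi i)"
    and minimizer: "\<exists>xs. \<forall>x. Fobj blk f Psi xs \<le> Fobj blk f Psi x"
    and mu_pos: "\<mu> > 0"
    and strong: "strongly_convex_L (Fobj blk f Psi) (Lnorm blk B L) \<mu>"
  shows "expect_ucdc k (\<lambda>is. Fobj blk f Psi (ucdc blk B L grad Psi x0 is k) - (INF x. Fobj blk f Psi x))
    \<le> ereal ((1 - (1 - gamma_mu \<mu>) / real CARD('b)) ^ k) * (Fobj blk f Psi x0 - (INF x. Fobj blk f Psi x))"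
proof -
  obtain xs where "\<And>x. Fobj blk f Psi xs \<le> Fobj blk f Psi x"
    using minimizer by blast
  then interpret ucdc_setting blk B Binv L f grad Psi \<mu> xs
    using B_posdef Binv L_pos f_convex f_grad f_lip Psi_pcc mu_pos strong by unfold_locales
  show ?thesis by (rule expect_ucdc_le)
qed

end
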